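(* Let $G$ be a finitely generated group hyperbolic relative to a finite collection $\mathcal P=\{P_\lambda\}_{\lambda\in\Lambda}$, $S$ a finite generating set, and $n\ge1$. Then the $G$-action on the $n$-Rips complex $\Gamma_n^\blacktriangle$ is cocompact, i.e. there are finitely many $G$-orbits of simplices.
   Context: Let $\Gamma$ be the Cayley graph of $G$ with respect to $S$, $V=G$, $W$ the set of cosets $gP_\lambda$. Relative hyperbolicity means the coned-off Cayley graph (vertex set $V\cup W$, edges of $\Gamma$ plus an edge $(v,w)$ whenever $v\in w$) is fine (for every edge $e$ and integer $m$, finitely many circuits of length $\le m$ contain $e$) and $\delta$-hyperbolic. Extend $|\cdot,\cdot|_S$ to $V\cup W$ via distances in $\Gamma$ between the corresponding elements/cosets. $\Gamma_n$ has vertex set $V\cup W$ and an edge between $u\ne u'$ whenever $|u,u'|_S\le n$; $\Gamma_n^\blacktriangle$ is obtained by spanning simplices on all cliques of $\Gamma_n$. *)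

theory Defs
  imports "HOL-Algebra.Algebra"
begin

definition word_len :: "('a, 'b) monoid_scheme \<Rightarrow> 'a set \<Rightarrow> 'a \<Rightarrow> nat" where
  "word_len G S g = (LEAST k. \<exists>ws. length ws = k \<and> set ws \<subseteq> S \<union> m_inv G ` S
        \<and> foldr (monoid.mult G) ws (one G) = g)"

definition word_dist :: "('a, 'b) monoid_scheme \<Rightarrow> 'a set \<Rightarrow> 'a \<Rightarrow> 'a \<Rightarrow> nat" where
  "word_dist G S g h = word_len G S (monoid.mult G (m_inv G g) h)"

text \<open>El g is the group element g (a vertex of V); Cos l C is the left coset C = g P_l
  (a vertex of W), tagged with the index l of the peripheral subgroup.\<close>
datatype ('a, 'l) cvert = El 'a | Cos 'l "'a set"

definition cverts :: "('a, 'b) monoid_scheme \<Rightarrow> 'l set \<Rightarrow> ('l \<Rightarrow> 'a set) \<Rightarrow> ('a, 'l) cvert set" where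
  "cverts G Lam P = El ` carrier G \<union>
     {Cos l (l_coset G g (P l)) | l g. l \<in> Lam \<and> g \<in> carrier G}"

fun ext_dist :: "('a, 'b) monoid_scheme \<Rightarrow> 'a set \<Rightarrow> ('a, 'l) cvert \<Rightarrow> ('a, 'l) cvert \<Rightarrow> nat" where
  "ext_dist G S (El g) (El h) = word_dist G S g h"
| "ext_dist G S (El g) (Cos l C) = Inf {word_dist G S g c | c. c \<in> C}"
| "ext_dist G S (Cos l C) (El g) = Inf {word_dist G S c g | c. c \<in> C}"
| "ext_dist G S (Cos l A) (Cos m B) = Inf {word_dist G S a b | a b. a \<in> A \<and> b \<in> B}"

definition coned_edge :: "('a, 'b) monoid_scheme \<Rightarrow> 'a set \<Rightarrow> 'l set \<Rightarrow> ('l \<Rightarrow> 'a set)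
    \<Rightarrow> ('a, 'l) cvert \<Rightarrow> ('a, 'l) cvert \<Rightarrow> bool" where
  "coned_edge G S Lam P u v \<longleftrightarrow> u \<in> cverts G Lam P \<and> v \<in> cverts G Lam P \<and> u \<noteq> v \<and>
     ((\<exists>g s. g \<in> carrier G \<and> s \<in> S \<and>
          ((u = El g \<and> v = El (monoid.mult G g s)) \<or> (v = El g \<and> u = El (monoid.mult G g s))))
    \<or> (\<exists>g l C. (u = El g \<and> v = Cos l C \<or> v = El g \<and> u = Cos l C) \<and> g \<in> C))"

definition is_circuit :: "('v \<Rightarrow> 'v \<Rightarrow> bool) \<Rightarrow> 'v list \<Rightarrow> bool" where
  "is_circuit E cs \<longleftrightarrow> length cs \<ge> 3 \<and> distinct cs \<and>
     (\<forall>i < length cs. E (cs ! i) (cs ! ((i + 1) mod length cs)))"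

definition circuit_contains_edge :: "'v list \<Rightarrow> 'v \<Rightarrow> 'v \<Rightarrow> bool" where
  "circuit_contains_edge cs u v \<longleftrightarrow> (\<exists>i < length cs.
      {cs ! i, cs ! ((i + 1) mod length cs)} = {u, v})"

definition fine_graph :: "('v \<Rightarrow> 'v \<Rightarrow> bool) \<Rightarrow> bool" where
  "fine_graph E \<longleftrightarrow> (\<forall>u v m. E u v \<longrightarrow>
      finite {cs. is_circuit E cs \<and> length cs \<le> m \<and> circuit_contains_edge cs u v})"

definition is_walk :: "('v \<Rightarrow> 'v \<Rightarrow> bool) \<Rightarrow> 'v list \<Rightarrow> bool" where
  "is_walk E ps \<longleftrightarrow> ps \<noteq> [] \<and> (\<forall>i. Suc i < length ps \<longrightarrow> E (ps ! i) (ps ! Suc i))"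

definition graph_dist :: "('v \<Rightarrow> 'v \<Rightarrow> bool) \<Rightarrow> 'v \<Rightarrow> 'v \<Rightarrow> nat" where
  "graph_dist E u v = (LEAST k. \<exists>ps. is_walk E ps \<and> hd ps = u \<and> last ps = v \<and> length ps = Suc k)"

definition gromov_prod :: "('v \<Rightarrow> 'v \<Rightarrow> bool) \<Rightarrow> 'v \<Rightarrow> 'v \<Rightarrow> 'v \<Rightarrow> real" where
  "gromov_prod E w x y = (real (graph_dist E x w) + real (graph_dist E y w) - real (graph_dist E x y)) / 2"

definition hyperbolic_graph :: "'v set \<Rightarrow> ('v \<Rightarrow> 'v \<Rightarrow> bool) \<Rightarrow> real \<Rightarrow> bool" where
  "hyperbolic_graph V E \<delta> \<longleftrightarrow> \<delta> \<ge> 0 \<and>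
     (\<forall>u\<in>V. \<forall>v\<in>V. \<exists>ps. is_walk E ps \<and> hd ps = u \<and> last ps = v \<and> set ps \<subseteq> V) \<and>
     (\<forall>w\<in>V. \<forall>x\<in>V. \<forall>y\<in>V. \<forall>z\<in>V.
        gromov_prod E w x z \<ge> min (gromov_prod E w x y) (gromov_prod E w y z) - \<delta>)"

definition rel_hyperbolic :: "('a, 'b) monoid_scheme \<Rightarrow> 'a set \<Rightarrow> 'l set \<Rightarrow> ('l \<Rightarrow> 'a set) \<Rightarrow> bool" where
  "rel_hyperbolic G S Lam P \<longleftrightarrow> (\<forall>l\<in>Lam. subgroup (P l) G) \<and>
     fine_graph (coned_edge G S Lam P) \<and>
     (\<exists>\<delta>. hyperbolic_graph (cverts G Lam P) (coned_edge G S Lam P) \<delta>)"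

definition rips_simplices :: "('a, 'b) monoid_scheme \<Rightarrow> 'a set \<Rightarrow> 'l set \<Rightarrow> ('l \<Rightarrow> 'a set) \<Rightarrow> nat
    \<Rightarrow> ('a, 'l) cvert set set" where
  "rips_simplices G S Lam P n = {\<sigma>. finite \<sigma> \<and> \<sigma> \<noteq> {} \<and> \<sigma> \<subseteq> cverts G Lam P \<and>
      (\<forall>u\<in>\<sigma>. \<forall>v\<in>\<sigma>. u \<noteq> v \<longrightarrow> ext_dist G S u v \<le> n)}"

fun cact :: "('a, 'b) monoid_scheme \<Rightarrow> 'a \<Rightarrow> ('a, 'l) cvert \<Rightarrow> ('a, 'l) cvert" where
  "cact G g (El h) = El (monoid.mult G g h)"
| "cact G g (Cos l C) = Cos l (l_coset G g C)"

end

theory Submission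
  imports Defs
begin

(* If the simplex contains a
   group element g, translating by g\<inverse> moves it into the finitely many vertices that have a
   representative in the n-ball. Otherwise it consists of cosets, and a translation makes one of
   them the cone point P_l while another one, D, meets the n-ball. Each further coset W comes within
   n of some p \<in> P_l, and p is joined to 1 by a path of length 3n+4 through W and D that avoids the
   cone point. In a fine graph only finitely many neighbours p of P_l admit such short detours, so
   W has a representative in a fixed finite set. *)

inductive reach_le :: "('v \<Rightarrow> 'v \<Rightarrow> bool) \<Rightarrow> nat \<Rightarrow> 'v \<Rightarrow> 'v \<Rightarrow> bool" for R where
  refl: "reach_le R k x x"
| step: "R x y \<Longrightarrow> reach_le R k y z \<Longrightarrow> reach_le R (Suc k) x z"

lemma reach_le_mono: "reach_le R k x y \<Longrightarrow> k \<le> k' \<Longrightarrow> reach_le R k' x y"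
proof (induction arbitrary: k' rule: reach_le.induct)
  case (step x y k z)
  then obtain j where "k' = Suc j" "k \<le> j" by (cases k') auto
  with step show ?case by (auto intro: reach_le.step)
qed (rule reach_le.refl)

lemma reach_le_trans: "reach_le R k x y \<Longrightarrow> reach_le R j y z \<Longrightarrow> reach_le R (k + j) x z"
  by (induction rule: reach_le.induct) (auto intro: reach_le.step reach_le_mono)

lemma reach_le_edge: "R x y \<Longrightarrow> reach_le R (Suc 0) x y"
  by (rule reach_le.step) (auto intro: reach_le.refl)

lemma reach_le_sym:
  assumes "symp R" shows "reach_le R k x y \<Longrightarrow> reach_le R k y x"
proof (induction rule: reach_le.induct)
  case (step x y k z)
  have "reach_le R (k + Suc 0) z x"
    using step assms by (intro reach_le_trans reach_le_edge) (auto dest: sympD)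
  then show ?case by simp
qed (rule reach_le.refl)

lemma reach_le_path:
  "reach_le R k x y \<Longrightarrow> \<exists>ps. successively R ps \<and> distinct ps \<and> ps \<noteq> [] \<and> hd ps = x \<and> last ps = y
     \<and> length ps \<le> Suc k"
proof (induction rule: reach_le.induct)
  case (refl k x)
  show ?case by (rule exI[of _ "[x]"]) simp
next
  case (step x y k z)
  then obtain ps where ps: "successively R ps" "distinct ps" "ps \<noteq> []" "hd ps = y" "last ps = z"
    "length ps \<le> Suc k" by blast
  show ?case
  proof (cases "x \<in> set ps")
    case True
    then obtain xs ys where "ps = xs @ x # ys" by (meson split_list)
    with ps show ?thesis
      by (intro exI[of _ "x # ys"]) (auto simp: successively_append_iff)
  next
    case False
    with ps step.hyps show ?thesis
      by (intro exI[of _ "x # ps"]) (auto simp: successively_Cons)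
  qed
qed

definition delete_vertex :: "('v \<Rightarrow> 'v \<Rightarrow> bool) \<Rightarrow> 'v \<Rightarrow> 'v \<Rightarrow> 'v \<Rightarrow> bool" where
  "delete_vertex E u a b \<longleftrightarrow> E a b \<and> a \<noteq> u \<and> b \<noteq> u"

lemma symp_delete_vertex: "symp E \<Longrightarrow> symp (delete_vertex E u)"
  unfolding delete_vertex_def symp_def by blast

lemma notin_path_delete_vertex:
  "successively (delete_vertex E u) ps \<Longrightarrow> hd ps \<noteq> u \<Longrightarrow> u \<notin> set ps"
  by (induction ps) (auto simp: successively_Cons delete_vertex_def)

lemma fine_graph_finite_detours:
  assumes fine: "fine_graph E" and sym: "symp E" and uv: "E u v"
  shows "finite {x. E u x \<and> reach_le (delete_vertex E u) k x v}"
proof -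
  let ?C = "{cs. is_circuit E cs \<and> length cs \<le> k + 2 \<and> circuit_contains_edge cs u v}"
  have "{x. E u x \<and> reach_le (delete_vertex E u) k x v} \<subseteq> insert v (insert u ((\<lambda>cs. cs ! 1) ` ?C))"
  proof
    fix x assume "x \<in> {x. E u x \<and> reach_le (delete_vertex E u) k x v}"
    then have ux: "E u x" and reach: "reach_le (delete_vertex E u) k x v" by auto
    show "x \<in> insert v (insert u ((\<lambda>cs. cs ! 1) ` ?C))"
    proof (cases "x = v \<or> x = u")
      case False
      obtain qs where qs: "successively (delete_vertex E u) qs" "distinct qs" "qs \<noteq> []"
        "hd qs = x" "last qs = v" "length qs \<le> Suc k"
        using reach_le_path[OF reach] by blast
      have u_qs: "u \<notin> set qs" using notin_path_delete_vertex[OF qs(1)] qs(4) False by blast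
      have edges: "E (qs ! i) (qs ! Suc i)" if "Suc i < length qs" for i
        using successively_nth[OF qs(1) that] by (simp add: delete_vertex_def)
      have len: "length qs \<ge> 2"
        using qs(3-5) False by (cases qs rule: remdups_adj.cases) auto
      have first: "qs ! 0 = x" and final: "qs ! (length qs - 1) = v"
        using qs(3-5) by (simp_all add: hd_conv_nth last_conv_nth)
      define cs where "cs = u # qs"
      have "is_circuit E cs"
        unfolding is_circuit_def
      proof (intro conjI allI impI)
        show "3 \<le> length cs" "distinct cs" using len u_qs qs(2) by (auto simp: cs_def)
        fix i assume "i < length cs"
        then consider "i = 0" | j where "i = Suc j" "Suc j < length qs" | "i = length qs"
          by (cases i) (auto simp: cs_def, metis Suc_lessI)
        then show "E (cs ! i) (cs ! ((i + 1) mod length cs))"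
        proof cases
          case 3
          then show ?thesis using final len sym uv by (auto simp: cs_def nth_Cons' dest: sympD)
        qed (use first len ux edges in \<open>auto simp: cs_def\<close>)
      qed
      moreover have "circuit_contains_edge cs u v"
        unfolding circuit_contains_edge_def
        by (rule exI[of _ "length qs"]) (use final len in \<open>auto simp: cs_def nth_Cons'\<close>)
      moreover have "length cs \<le> k + 2" "cs ! 1 = x" using qs(6) first by (simp_all add: cs_def)
      ultimately show ?thesis by force
    qed auto
  qed
  moreover have "finite ?C" using fine uv unfolding fine_graph_def by blast
  ultimately show ?thesis by (meson finite_subset finite_imageI finite_insert)
qed

context group
begin

lemma foldr_mult_closed: "set ws \<subseteq> carrier G \<Longrightarrow> foldr (\<otimes>) ws \<one> \<in> carrier G"
  by (induction ws) auto

lemma foldr_mult_eq: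
  "set xs \<subseteq> carrier G \<Longrightarrow> z \<in> carrier G \<Longrightarrow> foldr (\<otimes>) xs z = foldr (\<otimes>) xs \<one> \<otimes> z"
  by (induction xs) (auto simp: m_assoc foldr_mult_closed)

lemma word_len_one [simp]: "word_len G S \<one> = 0"
  unfolding word_len_def by (rule Least_eq_0) (rule exI[of _ "[]"], simp)

lemma word_dist_mult_left:
  "\<lbrakk>g \<in> carrier G; a \<in> carrier G; b \<in> carrier G\<rbrakk> \<Longrightarrow> word_dist G S (g \<otimes> a) (g \<otimes> b) = word_dist G S a b"
  by (simp add: word_dist_def inv_mult_group m_assoc[symmetric]) (simp add: m_assoc)

lemma word_dist_self [simp]: "a \<in> carrier G \<Longrightarrow> word_dist G S a a = 0"
  by (simp add: word_dist_def)

lemma word_dist_one_left [simp]: "g \<in> carrier G \<Longrightarrow> word_dist G S \<one> g = word_len G S g"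
  by (simp add: word_dist_def)

end

locale generated_group = group G for G :: "('a, 'b) monoid_scheme" (structure) +
  fixes S :: "'a set"
  assumes gens_closed: "S \<subseteq> carrier G"
    and generate_gens: "generate G S = carrier G"
begin

lemma letters_closed: "S \<union> m_inv G ` S \<subseteq> carrier G"
  using gens_closed by auto

lemma word_of_generate: "g \<in> generate G S \<Longrightarrow> \<exists>ws. set ws \<subseteq> S \<union> m_inv G ` S \<and> foldr (\<otimes>) ws \<one> = g"
proof (induction rule: generate.induct)
  case one
  show ?case by (rule exI[of _ "[]"]) simp
next
  case (incl h)
  then show ?case using gens_closed by (intro exI[of _ "[h]"]) auto
next
  case (inv h)
  then show ?case using gens_closed by (intro exI[of _ "[inv h]"]) auto
next
  case (eng h1 h2)
  then obtain xs ys where "set xs \<subseteq> S \<union> m_inv G ` S" "foldr (\<otimes>) xs \<one> = h1"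
    "set ys \<subseteq> S \<union> m_inv G ` S" "foldr (\<otimes>) ys \<one> = h2" by blast
  moreover have "set xs \<subseteq> carrier G" "set ys \<subseteq> carrier G"
    using calculation letters_closed by auto
  ultimately have "foldr (\<otimes>) (xs @ ys) \<one> = h1 \<otimes> h2"
    using foldr_mult_eq[of xs h2] foldr_mult_closed[of ys] by simp
  with \<open>set xs \<subseteq> S \<union> m_inv G ` S\<close> \<open>set ys \<subseteq> S \<union> m_inv G ` S\<close> show ?case
    by (intro exI[of _ "xs @ ys"]) simp
qed

lemma shortest_word:
  assumes "g \<in> carrier G"
  shows "\<exists>ws. length ws = word_len G S g \<and> set ws \<subseteq> S \<union> m_inv G ` S \<and> foldr (\<otimes>) ws \<one> = g"
proof -
  have "\<exists>k ws. length ws = k \<and> set ws \<subseteq> S \<union> m_inv G ` S \<and> foldr (\<otimes>) ws \<one> = g"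
    using word_of_generate assms generate_gens by blast
  from LeastI_ex[OF this] show ?thesis unfolding word_len_def .
qed

definition word_ball :: "nat \<Rightarrow> 'a set" where
  "word_ball r = {g \<in> carrier G. word_len G S g \<le> r}"

lemma finite_word_ball:
  assumes "finite S"
  shows "finite (word_ball r)"
proof -
  have "word_ball r \<subseteq> (\<lambda>ws. foldr (\<otimes>) ws \<one>) ` {ws. set ws \<subseteq> S \<union> m_inv G ` S \<and> length ws \<le> r}"
    unfolding word_ball_def using shortest_word by fastforce
  moreover have "finite {ws. set ws \<subseteq> S \<union> m_inv G ` S \<and> length ws \<le> r}"
    using assms by (intro finite_lists_length_le) auto
  ultimately show ?thesis by (rule finite_surj[rotated])
qed

end

locale coned_off_cayley = generated_group G S for G :: "('a, 'b) monoid_scheme" (structure) and S +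
  fixes Lam :: "'l set" and P :: "'l \<Rightarrow> 'a set"
  assumes subgroup_P: "l \<in> Lam \<Longrightarrow> subgroup (P l) G"
begin

abbreviation verts :: "('a, 'l) cvert set" where
  "verts \<equiv> cverts G Lam P"

abbreviation edge :: "('a, 'l) cvert \<Rightarrow> ('a, 'l) cvert \<Rightarrow> bool" where
  "edge \<equiv> coned_edge G S Lam P"

lemma El_in_verts [simp]: "El g \<in> verts \<longleftrightarrow> g \<in> carrier G"
  unfolding cverts_def by auto

lemma Cos_in_verts: "l \<in> Lam \<Longrightarrow> c \<in> carrier G \<Longrightarrow> Cos l (c <# P l) \<in> verts"
  unfolding cverts_def by blast

lemma peripheral_in_verts: "l \<in> Lam \<Longrightarrow> Cos l (P l) \<in> verts"
  using Cos_in_verts[of l \<one>] lcos_mult_one subgroup.subset subgroup_P by force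

lemma Cos_vertexE:
  assumes "Cos l C \<in> verts"
  obtains c where "l \<in> Lam" "c \<in> carrier G" "C = c <# P l"
  using assms unfolding cverts_def by auto

lemma Cos_vertex_carrier: "Cos l C \<in> verts \<Longrightarrow> C \<subseteq> carrier G"
  by (metis Cos_vertexE l_coset_subset_G subgroup.subset subgroup_P)

lemma Cos_vertex_repr: "Cos l C \<in> verts \<Longrightarrow> x \<in> C \<Longrightarrow> C = x <# P l"
  by (metis Cos_vertexE l_repr_independence subgroup_P)

lemma Cos_vertex_nonempty: "Cos l C \<in> verts \<Longrightarrow> C \<noteq> {}"
  by (metis Cos_vertexE empty_iff lcos_self subgroup_P)

lemma cact_closed: "g \<in> carrier G \<Longrightarrow> u \<in> verts \<Longrightarrow> cact G g u \<in> verts"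
proof (cases u)
  case (Cos l C)
  assume g: "g \<in> carrier G" and "u \<in> verts"
  then obtain c where "l \<in> Lam" "c \<in> carrier G" "C = c <# P l"
    using Cos Cos_vertexE by blast
  moreover have "g <# (c <# P l) = (g \<otimes> c) <# P l"
    using calculation g by (intro lcos_m_assoc subgroup.subset subgroup_P)
  ultimately show ?thesis using Cos g by (simp add: Cos_in_verts)
qed simp

lemma cact_cact:
  "\<lbrakk>g \<in> carrier G; h \<in> carrier G; u \<in> verts\<rbrakk> \<Longrightarrow> cact G g (cact G h u) = cact G (g \<otimes> h) u"
  by (cases u) (auto simp: m_assoc lcos_m_assoc dest: Cos_vertex_carrier)

lemma cact_one: "u \<in> verts \<Longrightarrow> cact G \<one> u = u"
  by (cases u) (auto simp: lcos_mult_one dest: Cos_vertex_carrier)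

lemma cact_inv_cancel: "g \<in> carrier G \<Longrightarrow> u \<in> verts \<Longrightarrow> cact G g (cact G (inv g) u) = u"
  by (simp add: cact_cact cact_one)

lemma inj_on_cact: "g \<in> carrier G \<Longrightarrow> inj_on (cact G g) verts"
  by (metis cact_inv_cancel inv_closed inv_inv inj_on_inverseI)

lemma ext_dist_cact:
  assumes g: "g \<in> carrier G" and u: "u \<in> verts" and v: "v \<in> verts"
  shows "ext_dist G S (cact G g u) (cact G g v) = ext_dist G S u v"
proof -
  have coset: "g <# C = (\<otimes>) g ` C" for C
    unfolding l_coset_def by auto
  have dist: "word_dist G S (g \<otimes> a) (g \<otimes> b) = word_dist G S a b"
    if "a \<in> carrier G" "b \<in> carrier G" for a b
    using g that by (rule word_dist_mult_left)
  have pairs: "{word_dist G S a b | a b. a \<in> g <# A \<and> b \<in> g <# B}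
      = {word_dist G S a b | a b. a \<in> A \<and> b \<in> B}"
    if "A \<subseteq> carrier G" "B \<subseteq> carrier G" for A B
  proof -
    have "{word_dist G S a b | a b. a \<in> g <# A \<and> b \<in> g <# B}
        = {word_dist G S (g \<otimes> a) (g \<otimes> b) | a b. a \<in> A \<and> b \<in> B}"
      unfolding coset by blast
    also have "\<dots> = {word_dist G S a b | a b. a \<in> A \<and> b \<in> B}"
      using that by (intro Collect_cong) (metis dist subsetD)
    finally show ?thesis .
  qed
  have left: "{word_dist G S (g \<otimes> a) c | c. c \<in> g <# C} = {word_dist G S a c | c. c \<in> C}"
    if "a \<in> carrier G" "C \<subseteq> carrier G" for a C
  proof -
    have "{word_dist G S (g \<otimes> a) c | c. c \<in> g <# C} = {word_dist G S (g \<otimes> a) (g \<otimes> c) | c. c \<in> C}"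
      unfolding coset by blast
    also have "\<dots> = {word_dist G S a c | c. c \<in> C}"
      using that by (intro Collect_cong) (metis dist subsetD)
    finally show ?thesis .
  qed
  have right: "{word_dist G S c (g \<otimes> a) | c. c \<in> g <# C} = {word_dist G S c a | c. c \<in> C}"
    if "a \<in> carrier G" "C \<subseteq> carrier G" for a C
  proof -
    have "{word_dist G S c (g \<otimes> a) | c. c \<in> g <# C} = {word_dist G S (g \<otimes> c) (g \<otimes> a) | c. c \<in> C}"
      unfolding coset by blast
    also have "\<dots> = {word_dist G S c a | c. c \<in> C}"
      using that by (intro Collect_cong) (metis dist subsetD)
    finally show ?thesis .
  qed
  show ?thesis
  proof (cases u; cases v)
    fix a b assume "u = El a" "v = El b"
    then show ?thesis using u v by (simp add: dist)
  next
    fix a l C assume "u = El a" "v = Cos l C"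
    then show ?thesis using u v left[of a C] Cos_vertex_carrier by simp
  next
    fix a l C assume "u = Cos l C" "v = El a"
    then show ?thesis using u v right[of a C] Cos_vertex_carrier by simp
  next
    fix l m A B assume "u = Cos l A" "v = Cos m B"
    then show ?thesis using u v pairs[of A B] Cos_vertex_carrier by simp
  qed
qed

lemma ext_dist_self: "u \<in> verts \<Longrightarrow> ext_dist G S u u = 0"
proof (cases u)
  case (Cos l C)
  assume "u \<in> verts"
  then obtain c where "c \<in> C" "c \<in> carrier G"
    using Cos Cos_vertex_nonempty Cos_vertex_carrier by blast
  then have "0 \<in> {word_dist G S a b | a b. a \<in> C \<and> b \<in> C}" by force
  then show ?thesis using Cos by (simp add: Inf_nat_def Least_eq_0)
qed simp

lemma ext_dist_El_Cos_witness:
  assumes "Cos l C \<in> verts" "ext_dist G S (El a) (Cos l C) \<le> n"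
  obtains c where "c \<in> C" "word_dist G S a c \<le> n"
proof -
  have "{word_dist G S a c | c. c \<in> C} \<noteq> {}"
    using Cos_vertex_nonempty[OF assms(1)] by blast
  from Inf_nat_def1[OF this] assms(2) show thesis using that by force
qed

lemma ext_dist_Cos_Cos_witness:
  assumes "Cos l A \<in> verts" "Cos m B \<in> verts" "ext_dist G S (Cos l A) (Cos m B) \<le> n"
  obtains a b where "a \<in> A" "b \<in> B" "word_dist G S a b \<le> n"
proof -
  have "{word_dist G S a b | a b. a \<in> A \<and> b \<in> B} \<noteq> {}"
    using Cos_vertex_nonempty assms(1,2) by blast
  from Inf_nat_def1[OF this] assms(3) show thesis using that by force
qed

lemma rips_simplex_verts: "\<sigma> \<in> rips_simplices G S Lam P n \<Longrightarrow> \<sigma> \<subseteq> verts"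
  unfolding rips_simplices_def by blast

lemma rips_simplex_diam:
  "\<sigma> \<in> rips_simplices G S Lam P n \<Longrightarrow> u \<in> \<sigma> \<Longrightarrow> v \<in> \<sigma> \<Longrightarrow> ext_dist G S u v \<le> n"
  unfolding rips_simplices_def by (cases "u = v") (auto simp: ext_dist_self)

lemma cact_rips_simplex:
  assumes g: "g \<in> carrier G" and \<sigma>: "\<sigma> \<in> rips_simplices G S Lam P n"
  shows "cact G g ` \<sigma> \<in> rips_simplices G S Lam P n"
proof -
  have "\<sigma> \<subseteq> verts" using \<sigma> by (rule rips_simplex_verts)
  then show ?thesis
    using \<sigma> rips_simplex_diam[OF \<sigma>] g
    unfolding rips_simplices_def by (auto simp: cact_closed ext_dist_cact subset_iff)
qed

lemma symp_edge: "symp edge"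
  unfolding coned_edge_def symp_def by blast

lemma edge_El_Cos: "Cos l C \<in> verts \<Longrightarrow> x \<in> C \<Longrightarrow> edge (El x) (Cos l C)"
  unfolding coned_edge_def using Cos_vertex_carrier by auto

lemma edge_El_mult_gen: "g \<in> carrier G \<Longrightarrow> s \<in> S \<Longrightarrow> g \<otimes> s \<noteq> g \<Longrightarrow> edge (El g) (El (g \<otimes> s))"
  unfolding coned_edge_def using gens_closed by auto

lemma reach_word:
  assumes "set ws \<subseteq> S \<union> m_inv G ` S" "a \<in> carrier G"
  shows "reach_le (delete_vertex edge (Cos l C)) (length ws) (El a) (El (a \<otimes> foldr (\<otimes>) ws \<one>))"
  using assms
proof (induction ws arbitrary: a)
  case Nil
  then show ?case by (simp add: reach_le.refl)
next
  case (Cons w ws)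
  have w: "w \<in> carrier G" and ws: "set ws \<subseteq> carrier G"
    using Cons.prems(1) letters_closed by auto
  have "reach_le (delete_vertex edge (Cos l C)) (length ws) (El (a \<otimes> w))
      (El (a \<otimes> foldr (\<otimes>) (w # ws) \<one>))"
    using Cons.IH[of "a \<otimes> w"] Cons.prems w ws by (simp add: m_assoc foldr_mult_closed)
  moreover have "a \<otimes> w = a \<or> delete_vertex edge (Cos l C) (El a) (El (a \<otimes> w))"
  proof (cases "w \<in> S")
    case True
    then show ?thesis using Cons.prems(2) edge_El_mult_gen by (auto simp: delete_vertex_def)
  next
    case False
    then obtain s where s: "s \<in> S" "w = inv s" using Cons.prems(1) by auto
    then have "a \<otimes> w \<otimes> s = a" using Cons.prems(2) gens_closed by (auto simp: m_assoc)
    then show ?thesis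
      using edge_El_mult_gen[of "a \<otimes> w" s] s(1) Cons.prems(2) w symp_edge
      by (auto simp: delete_vertex_def dest: sympD)
  qed
  ultimately show ?case
    by (auto intro: reach_le.step reach_le_mono)
qed

lemma reach_word_dist:
  assumes "a \<in> carrier G" "b \<in> carrier G" "word_dist G S a b \<le> d"
  shows "reach_le (delete_vertex edge (Cos l C)) d (El a) (El b)"
proof -
  obtain ws where ws: "length ws = word_dist G S a b" "set ws \<subseteq> S \<union> m_inv G ` S"
    "foldr (\<otimes>) ws \<one> = inv a \<otimes> b"
    using shortest_word[of "inv a \<otimes> b"] assms(1,2) unfolding word_dist_def by auto
  have "a \<otimes> (inv a \<otimes> b) = b" using assms(1,2) by (simp add: m_assoc[symmetric])
  with reach_word[OF ws(2) assms(1)] ws(1,3) assms(3) show ?thesis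
    by (metis reach_le_mono)
qed

lemma reach_through_coset:
  assumes "Cos m W \<in> verts" "Cos m W \<noteq> Cos l C" "x \<in> W" "y \<in> W"
  shows "reach_le (delete_vertex edge (Cos l C)) 2 (El x) (El y)"
proof -
  have "delete_vertex edge (Cos l C) (El x) (Cos m W)" "delete_vertex edge (Cos l C) (Cos m W) (El y)"
    using assms edge_El_Cos symp_edge by (auto simp: delete_vertex_def dest: sympD)
  then show ?thesis by (auto intro!: reach_le.step intro: reach_le.refl simp: numeral_2_eq_2)
qed

definition verts_with_rep :: "'a set \<Rightarrow> ('a, 'l) cvert set" where
  "verts_with_rep R = El ` R \<union> (\<lambda>(l, c). Cos l (c <# P l)) ` (Lam \<times> R)"

lemma finite_verts_with_rep: "finite Lam \<Longrightarrow> finite R \<Longrightarrow> finite (verts_with_rep R)"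
  unfolding verts_with_rep_def by simp

lemma verts_with_rep_mono: "R \<subseteq> R' \<Longrightarrow> verts_with_rep R \<subseteq> verts_with_rep R'"
  unfolding verts_with_rep_def by blast

lemma Cos_in_verts_with_rep: "Cos l C \<in> verts \<Longrightarrow> c \<in> C \<Longrightarrow> c \<in> R \<Longrightarrow> Cos l C \<in> verts_with_rep R"
proof -
  assume C: "Cos l C \<in> verts" and c: "c \<in> C" "c \<in> R"
  then have "l \<in> Lam" by (auto elim: Cos_vertexE)
  with C c show ?thesis unfolding verts_with_rep_def using Cos_vertex_repr by force
qed

lemma peripheral_in_verts_with_rep: "l \<in> Lam \<Longrightarrow> \<one> \<in> R \<Longrightarrow> Cos l (P l) \<in> verts_with_rep R"
  by (metis Cos_in_verts_with_rep peripheral_in_verts subgroup.one_closed subgroup_P)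

lemma one_in_word_ball: "\<one> \<in> word_ball n"
  unfolding word_ball_def by simp

lemma near_one_in_verts_with_rep:
  assumes v: "v \<in> verts" and near: "ext_dist G S (El \<one>) v \<le> n"
  shows "v \<in> verts_with_rep (word_ball n)"
proof (cases v)
  case (El b)
  then show ?thesis using v near unfolding verts_with_rep_def word_ball_def by simp
next
  case (Cos l C)
  then obtain c where "c \<in> C" "word_dist G S \<one> c \<le> n"
    using v near ext_dist_El_Cos_witness by metis
  moreover have "c \<in> carrier G" using calculation(1) v Cos Cos_vertex_carrier by blast
  ultimately show ?thesis using v Cos Cos_in_verts_with_rep[of l C c] by (auto simp: word_ball_def)
qed

lemma translate_simplex_at_element:
  assumes \<sigma>: "\<sigma> \<in> rips_simplices G S Lam P n" and a: "El a \<in> \<sigma>"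
  shows "cact G (inv a) ` \<sigma> \<subseteq> verts_with_rep (word_ball n)"
proof
  fix v assume v: "v \<in> cact G (inv a) ` \<sigma>"
  have "a \<in> carrier G" using a rips_simplex_verts[OF \<sigma>] by auto
  then have \<sigma>': "cact G (inv a) ` \<sigma> \<in> rips_simplices G S Lam P n" and "El \<one> \<in> cact G (inv a) ` \<sigma>"
    using \<sigma> a cact_rips_simplex by (auto intro: image_eqI[where x = "El a"])
  then show "v \<in> verts_with_rep (word_ball n)"
    using v rips_simplex_diam[OF \<sigma>'] rips_simplex_verts[OF \<sigma>'] near_one_in_verts_with_rep by blast
qed

definition peripheral_detours :: "nat \<Rightarrow> 'a set" where
  "peripheral_detours K =
     {p. \<exists>l\<in>Lam. p \<in> P l \<and> reach_le (delete_vertex edge (Cos l (P l))) K (El p) (El \<one>)}"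

lemma finite_peripheral_detours:
  assumes "finite Lam" "fine_graph edge"
  shows "finite (peripheral_detours K)"
proof -
  define detour where
    "detour l = {x. edge (Cos l (P l)) x \<and> reach_le (delete_vertex edge (Cos l (P l))) K x (El \<one>)}"
    for l
  have edge_P: "edge (Cos l (P l)) (El p)" if "l \<in> Lam" "p \<in> P l" for l p
    using that peripheral_in_verts edge_El_Cos symp_edge by (meson sympD)
  have "peripheral_detours K \<subseteq> (\<Union>l\<in>Lam. El -` detour l)"
    unfolding peripheral_detours_def detour_def using edge_P by auto
  moreover have "finite (detour l)" if "l \<in> Lam" for l
    unfolding detour_def using assms(2) symp_edge
    by (rule fine_graph_finite_detours) (use that edge_P subgroup.one_closed subgroup_P in blast)
  then have "finite (\<Union>l\<in>Lam. El -` detour l)"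
    using assms(1) by (intro finite_UN_I finite_vimageI) (auto simp: inj_def)
  ultimately show ?thesis by (rule finite_subset)
qed

(* 3n+4 is the length of the detour built in translate_simplex_at_peripheral. *)
definition simplex_reps :: "nat \<Rightarrow> 'a set" where
  "simplex_reps n = word_ball n \<union> (\<Union>p \<in> peripheral_detours (3 * n + 4). p <# word_ball n)"

lemma finite_simplex_reps:
  assumes "finite S" "finite Lam" "fine_graph edge"
  shows "finite (simplex_reps n)"
  unfolding simplex_reps_def l_coset_def
  using assms finite_word_ball finite_peripheral_detours by auto

lemma translate_simplex_at_peripheral:
  assumes \<sigma>: "\<sigma> \<in> rips_simplices G S Lam P n" and l: "l \<in> Lam" and U: "Cos l (P l) \<in> \<sigma>"
    and v: "Cos m D \<in> \<sigma>" "Cos m D \<noteq> Cos l (P l)" and b: "b \<in> D" "word_len G S b \<le> n"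
    and w: "Cos k W \<in> \<sigma>"
  shows "Cos k W \<in> verts_with_rep (simplex_reps n)"
proof (cases "Cos k W = Cos l (P l)")
  case True
  then show ?thesis
    using l peripheral_in_verts_with_rep one_in_word_ball unfolding simplex_reps_def by simp
next
  case False
  let ?E = "delete_vertex edge (Cos l (P l))"
  have verts: "Cos l (P l) \<in> verts" "Cos m D \<in> verts" "Cos k W \<in> verts"
    using \<sigma> U v w rips_simplex_verts by blast+
  obtain p x where px: "p \<in> P l" "x \<in> W" "word_dist G S p x \<le> n"
    using ext_dist_Cos_Cos_witness[OF verts(1,3) rips_simplex_diam[OF \<sigma> U w]] .
  obtain y y' where yy': "y \<in> W" "y' \<in> D" "word_dist G S y y' \<le> n"
    using ext_dist_Cos_Cos_witness[OF verts(3,2) rips_simplex_diam[OF \<sigma> w v(1)]] .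
  have carrier: "p \<in> carrier G" "x \<in> carrier G" "y \<in> carrier G" "y' \<in> carrier G" "b \<in> carrier G"
    using px(1,2) yy'(1,2) b(1) verts(1,2,3) Cos_vertex_carrier by (meson subsetD)+
  \<comment> \<open>the detour p \<rightarrow> x \<rightarrow> W \<rightarrow> y \<rightarrow> y' \<rightarrow> D \<rightarrow> b \<rightarrow> \<one> avoids the cone point P l\<close>
  have "reach_le ?E n (El p) (El x)" "reach_le ?E n (El y) (El y')"
    using px(3) yy'(3) carrier by (simp_all add: reach_word_dist)
  moreover have "reach_le ?E 2 (El x) (El y)" "reach_le ?E 2 (El y') (El b)"
    using reach_through_coset[OF verts(3) False px(2) yy'(1)]
      reach_through_coset[OF verts(2) v(2) yy'(2) b(1)] by simp_all
  moreover have "reach_le ?E n (El b) (El \<one>)"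
    by (rule reach_le_sym[OF symp_delete_vertex[OF symp_edge]], rule reach_word_dist)
      (use b carrier in auto)
  ultimately have "reach_le ?E (n + (2 + (n + (2 + n)))) (El p) (El \<one>)"
    by (meson reach_le_trans)
  then have "p \<in> peripheral_detours (3 * n + 4)"
    unfolding peripheral_detours_def using l px(1) by (auto simp: numeral_eq_Suc add.commute)
  moreover have "x = p \<otimes> (inv p \<otimes> x)" "inv p \<otimes> x \<in> word_ball n"
    using carrier px(3) by (simp_all add: m_assoc[symmetric] word_ball_def word_dist_def)
  ultimately have "x \<in> simplex_reps n"
    unfolding simplex_reps_def l_coset_def by blast
  then show ?thesis using Cos_in_verts_with_rep verts(3) px(2) by blast
qed

lemma cact_inv_repr: "Cos l C \<in> verts \<Longrightarrow> a \<in> C \<Longrightarrow> cact G (inv a) (Cos l C) = Cos l (P l)"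
proof -
  assume C: "Cos l C \<in> verts" and a: "a \<in> C"
  then have "a \<in> carrier G" "C = a <# P l" "l \<in> Lam"
    using Cos_vertex_carrier Cos_vertex_repr by (auto elim: Cos_vertexE)
  then show ?thesis
    by (simp add: lcos_m_assoc lcos_mult_one subgroup.subset subgroup_P)
qed

lemma translate_simplex_of_cosets:
  assumes \<sigma>: "\<sigma> \<in> rips_simplices G S Lam P n" and no_El: "\<And>a. El a \<notin> \<sigma>"
    and u: "Cos l C \<in> \<sigma>" and v: "Cos m D \<in> \<sigma>" "Cos m D \<noteq> Cos l C"
  shows "\<exists>g\<in>carrier G. cact G g ` \<sigma> \<subseteq> verts_with_rep (simplex_reps n)"
proof -
  have verts: "\<sigma> \<subseteq> verts" using \<sigma> by (rule rips_simplex_verts)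
  have l: "l \<in> Lam" using u verts by (auto elim: Cos_vertexE)
  obtain a b where ab: "a \<in> C" "b \<in> D" "word_dist G S a b \<le> n"
    using ext_dist_Cos_Cos_witness rips_simplex_diam[OF \<sigma> u v(1)] u v(1) verts by blast
  have a: "a \<in> carrier G"
    using ab(1) u verts Cos_vertex_carrier by blast
  let ?\<sigma>' = "cact G (inv a) ` \<sigma>"
  have "?\<sigma>' \<in> rips_simplices G S Lam P n" using a \<sigma> by (simp add: cact_rips_simplex)
  moreover have u': "cact G (inv a) (Cos l C) = Cos l (P l)" using cact_inv_repr u verts ab(1) by blast
  then have "Cos l (P l) \<in> ?\<sigma>'" using u by (metis image_eqI)
  moreover have "Cos m (inv a <# D) \<in> ?\<sigma>'" using v(1) by force
  moreover have "Cos m (inv a <# D) \<noteq> Cos l (P l)"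
  proof
    assume "Cos m (inv a <# D) = Cos l (P l)"
    then have "cact G (inv a) (Cos m D) = cact G (inv a) (Cos l C)" using u' by simp
    then show False using inj_on_cact[of "inv a"] a u v verts by (meson inj_onD inv_closed subsetD)
  qed
  moreover have "inv a \<otimes> b \<in> inv a <# D" "word_len G S (inv a \<otimes> b) \<le> n"
    using ab(2,3) unfolding l_coset_def word_dist_def by auto
  ultimately have rep: "Cos k W \<in> verts_with_rep (simplex_reps n)" if "Cos k W \<in> ?\<sigma>'" for k W
    using translate_simplex_at_peripheral[OF _ l] that by blast
  have "?\<sigma>' \<subseteq> verts_with_rep (simplex_reps n)"
  proof
    fix w assume w: "w \<in> ?\<sigma>'"
    then obtain w0 where "w0 \<in> \<sigma>" "w = cact G (inv a) w0" by blast
    with no_El obtain k W where "w = Cos k W" by (cases w0) auto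
    then show "w \<in> verts_with_rep (simplex_reps n)" using w rep by metis
  qed
  then show ?thesis using a by blast
qed

lemma rips_simplex_translate:
  assumes \<sigma>: "\<sigma> \<in> rips_simplices G S Lam P n"
  shows "\<exists>g\<in>carrier G. cact G g ` \<sigma> \<subseteq> verts_with_rep (simplex_reps n)"
proof (cases "\<exists>a. El a \<in> \<sigma>")
  case True
  then obtain a where a: "El a \<in> \<sigma>" by blast
  then have "a \<in> carrier G" using rips_simplex_verts[OF \<sigma>] by auto
  moreover have "verts_with_rep (word_ball n) \<subseteq> verts_with_rep (simplex_reps n)"
    by (rule verts_with_rep_mono) (auto simp: simplex_reps_def)
  ultimately show ?thesis using translate_simplex_at_element[OF \<sigma> a] by blast
next
  case False
  have verts: "\<sigma> \<subseteq> verts" using \<sigma> by (rule rips_simplex_verts)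
  obtain u where u: "u \<in> \<sigma>" using \<sigma> unfolding rips_simplices_def by blast
  with False obtain l C where uC: "u = Cos l C" by (cases u) auto
  show ?thesis
  proof (cases "\<sigma> = {u}")
    case True
    obtain a where "a \<in> C" using u uC verts Cos_vertex_nonempty by blast
    moreover have "a \<in> carrier G" "l \<in> Lam"
      using calculation u uC verts Cos_vertex_carrier by (auto elim: Cos_vertexE)
    ultimately show ?thesis
      using True u uC verts cact_inv_repr peripheral_in_verts_with_rep one_in_word_ball
      by (intro bexI[of _ "inv a"]) (auto simp: simplex_reps_def)
  next
    case False
    then obtain v where "v \<in> \<sigma>" "v \<noteq> u" using u by blast
    with \<open>\<nexists>a. El a \<in> \<sigma>\<close> u uC show ?thesis
      by (cases v) (auto intro: translate_simplex_of_cosets[OF \<sigma>])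
  qed
qed

end

theorem corollary2p4:
  fixes G :: "('a, 'b) monoid_scheme" and S :: "'a set" and Lam :: "'l set"
    and P :: "'l \<Rightarrow> 'a set" and n :: nat
  assumes "group G"
    and "finite S" and "S \<subseteq> carrier G" and "generate G S = carrier G"
    and "finite Lam"
    and "rel_hyperbolic G S Lam P"
    and "n \<ge> 1"
  shows "\<exists>F. finite F \<and> F \<subseteq> rips_simplices G S Lam P n \<and>
           (\<forall>\<sigma>\<in>rips_simplices G S Lam P n. \<exists>g\<in>carrier G. \<exists>\<tau>\<in>F. \<sigma> = cact G g ` \<tau>)"
proof -
  have "\<forall>l\<in>Lam. subgroup (P l) G" and fine: "fine_graph (coned_edge G S Lam P)"
    using assms(6) unfolding rel_hyperbolic_def by blast+
  then interpret coned_off_cayley G S Lam P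
    using assms(1,3,4) by (simp add: coned_off_cayley_def generated_group_def
        generated_group_axioms_def coned_off_cayley_axioms_def)
  define N where "N = verts_with_rep (simplex_reps n)"
  define F where "F = {\<tau> \<in> rips_simplices G S Lam P n. \<tau> \<subseteq> N}"
  have "finite N"
    unfolding N_def using assms(2,5) fine by (intro finite_verts_with_rep finite_simplex_reps)
  then have "finite F" unfolding F_def by (auto intro: finite_subset[of _ "Pow N"])
  moreover have "\<exists>g\<in>carrier G. \<exists>\<tau>\<in>F. \<sigma> = cact G g ` \<tau>" if \<sigma>: "\<sigma> \<in> rips_simplices G S Lam P n" for \<sigma>
  proof -
    obtain h where h: "h \<in> carrier G" "cact G h ` \<sigma> \<subseteq> N"
      using rips_simplex_translate[OF \<sigma>] unfolding N_def by blast
    have "\<sigma> = cact G (inv\<^bsub>G\<^esub> h) ` cact G h ` \<sigma>"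
      using h(1) rips_simplex_verts[OF \<sigma>] cact_inv_cancel[of "inv\<^bsub>G\<^esub> h"] by (force simp: image_image)
    then show ?thesis
      using h cact_rips_simplex[OF h(1) \<sigma>] unfolding F_def by (intro bexI[of _ "inv\<^bsub>G\<^esub> h"]) auto
  qed
  ultimately show ?thesis unfolding F_def by blast
qed

end
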